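(* Let $\mu_c,\mu_s\in\mathbb{R}$, $c\ge0$, $\sigma_c,\sigma_s>0$, $\eta_c,\eta_s>0$. Let $U^*$ be the optimal value of $$\max_{r\in\mathbb{R}}\; p_0+r\mu_c-c-\eta_c r^2\sigma_c^2\quad\text{subject to}\quad p_0=\mu_s(1-r)-\eta_s\sigma_s^2(1-r)^2,$$ and let $U_0=\mu_s-\eta_s\sigma_s^2-c$ be the creator utility without royalties ($r=0$). Then the utility gain from royalties is $$f:=U^*-U_0=\frac{\big(2\eta_s\sigma_s^2-\mu_s+\mu_c\big)^2}{4\big(\eta_s\sigma_s^2+\eta_c\sigma_c^2\big)}\ge 0.$$ Moreover, viewing $f$ as a function of $(\mu_s,\mu_c,\eta_s,\eta_c,\sigma_s,\sigma_c)$: $f$ is increasing in $\sigma_s$ (i.e. $\partial f/\partial\sigma_s\ge0$) if and only if $-2\eta_s\sigma_s^2-4\eta_c\sigma_c^2\le\mu_s-\mu_c\le 2\eta_s\sigma_s^2$; and $f$ (weakly) decreases as $\sigma_c$ increases.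
   Context: Interpretation: a creator sells an NFT at mint price $p_0$ with royalty rate $r$ to a speculator who resells at the realized end-buyer valuation $V$. The creator believes $\mathbb{E}[V]=\mu_c$, $\mathrm{Var}(V)=\sigma_c^2$; the speculator believes $\mathbb{E}[V]=\mu_s$, $\mathrm{Var}(V)=\sigma_s^2$. Each has mean-variance utility with risk-aversion coefficient $\eta_c$ resp. $\eta_s$ (creator profit $p_0+rV-c$, speculator profit $(1-r)V-p_0$); the constraint is the speculator's binding participation constraint under his own beliefs. *)

theory Defs
  imports "HOL-Analysis.Analysis"
begin

text \<open>Speculator's binding participation constraint: mint price as function of r.\<close>
definition mint_price :: "real \<Rightarrow> real \<Rightarrow> real \<Rightarrow> real \<Rightarrow> real" where
  "mint_price mu_s eta_s sigma_s r = mu_s * (1 - r) - eta_s * sigma_s^2 * (1 - r)^2"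

definition creator_util ::
  "real \<Rightarrow> real \<Rightarrow> real \<Rightarrow> real \<Rightarrow> real \<Rightarrow> real \<Rightarrow> real \<Rightarrow> real \<Rightarrow> real" where
  "creator_util mu_s mu_c eta_s eta_c sigma_s sigma_c c r =
     mint_price mu_s eta_s sigma_s r + r * mu_c - c - eta_c * r^2 * sigma_c^2"

definition U_star ::
  "real \<Rightarrow> real \<Rightarrow> real \<Rightarrow> real \<Rightarrow> real \<Rightarrow> real \<Rightarrow> real \<Rightarrow> real" where
  "U_star mu_s mu_c eta_s eta_c sigma_s sigma_c c =
     Sup (range (creator_util mu_s mu_c eta_s eta_c sigma_s sigma_c c))"

definition U_0 :: "real \<Rightarrow> real \<Rightarrow> real \<Rightarrow> real \<Rightarrow> real" where
  "U_0 mu_s eta_s sigma_s c = mu_s - eta_s * sigma_s^2 - c"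

definition gain ::
  "real \<Rightarrow> real \<Rightarrow> real \<Rightarrow> real \<Rightarrow> real \<Rightarrow> real \<Rightarrow> real \<Rightarrow> real" where
  "gain mu_s mu_c eta_s eta_c sigma_s sigma_c c =
     U_star mu_s mu_c eta_s eta_c sigma_s sigma_c c - U_0 mu_s eta_s sigma_s c"

end

theory Submission
  imports Defs
begin

text \<open>Substituting the binding participation constraint makes the creator's utility a concave
  quadratic \<open>U\<^sub>0 + D r - K r\<^sup>2\<close> in the royalty rate \<open>r\<close>, with
  \<open>D = 2 \<eta>\<^sub>s \<sigma>\<^sub>s\<^sup>2 - \<mu>\<^sub>s + \<mu>\<^sub>c\<close> and \<open>K = \<eta>\<^sub>s \<sigma>\<^sub>s\<^sup>2 + \<eta>\<^sub>c \<sigma>\<^sub>c\<^sup>2 > 0\<close>. Its maximum is attained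
  at the vertex \<open>r = D / (2K)\<close>, so the gain is \<open>D\<^sup>2 / (4K)\<close>: nonnegative, and antitone in
  \<open>\<sigma>\<^sub>c\<close>, which only enters \<open>K\<close>. Differentiating in \<open>\<sigma>\<^sub>s\<close> gives
  \<open>2 \<eta>\<^sub>s \<sigma>\<^sub>s D (4K - D) / (4K\<^sup>2)\<close>, which is nonnegative exactly when \<open>0 \<le> D \<le> 4K\<close>.\<close>

lemma concave_quadratic_completed_square:
  fixes a D K r :: real
  assumes "K \<noteq> 0"
  shows "a + D * r - K * r^2 = a + D^2 / (4 * K) - K * (r - D / (2 * K))^2"
  using assms by (simp add: field_simps power2_eq_square)

lemma concave_quadratic_le_vertex:
  fixes a D K r :: real
  assumes "K > 0"
  shows "a + D * r - K * r^2 \<le> a + D^2 / (4 * K)"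
proof -
  have K_ne: "K \<noteq> 0"
    using assms by simp
  show ?thesis
    unfolding concave_quadratic_completed_square[OF K_ne] using assms by simp
qed

lemma concave_quadratic_at_vertex:
  fixes a D K :: real
  assumes "K \<noteq> 0"
  shows "a + D * (D / (2 * K)) - K * (D / (2 * K))^2 = a + D^2 / (4 * K)"
  unfolding concave_quadratic_completed_square[OF assms] by simp

lemma Sup_range_concave_quadratic:
  fixes a D K :: real
  assumes "K > 0"
  shows "Sup (range (\<lambda>r. a + D * r - K * r^2)) = a + D^2 / (4 * K)"
proof (rule cSup_eq_maximum)
  have K_ne: "K \<noteq> 0"
    using assms by simp
  have "a + D^2 / (4 * K) = (\<lambda>r. a + D * r - K * r^2) (D / (2 * K))"
    by (simp only: concave_quadratic_at_vertex[OF K_ne])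
  then show "a + D^2 / (4 * K) \<in> range (\<lambda>r. a + D * r - K * r^2)"
    by (rule range_eqI)
qed (use concave_quadratic_le_vertex[OF assms] in auto)

lemma creator_util_eq_quadratic:
  "creator_util mu_s mu_c eta_s eta_c s t c r
     = U_0 mu_s eta_s s c + (2 * eta_s * s^2 - mu_s + mu_c) * r
       - (eta_s * s^2 + eta_c * t^2) * r^2"
  unfolding creator_util_def mint_price_def U_0_def by (simp add: algebra_simps power2_eq_square)

lemma U_star_eq:
  assumes "eta_s * s^2 + eta_c * t^2 > 0"
  shows "U_star mu_s mu_c eta_s eta_c s t c
     = U_0 mu_s eta_s s c + (2 * eta_s * s^2 - mu_s + mu_c)^2 / (4 * (eta_s * s^2 + eta_c * t^2))"
  unfolding U_star_def creator_util_eq_quadratic using Sup_range_concave_quadratic[OF assms] .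

lemma creator_util_attains_U_star:
  assumes "eta_s * s^2 + eta_c * t^2 > 0"
  shows "creator_util mu_s mu_c eta_s eta_c s t c
           ((2 * eta_s * s^2 - mu_s + mu_c) / (2 * (eta_s * s^2 + eta_c * t^2)))
         = U_star mu_s mu_c eta_s eta_c s t c"
proof -
  have "eta_s * s^2 + eta_c * t^2 \<noteq> 0"
    using assms by simp
  then show ?thesis
    unfolding creator_util_eq_quadratic U_star_eq[OF assms] by (fact concave_quadratic_at_vertex)
qed

lemma gain_eq:
  assumes "eta_s * s^2 + eta_c * t^2 > 0"
  shows "gain mu_s mu_c eta_s eta_c s t c
     = (2 * eta_s * s^2 - mu_s + mu_c)^2 / (4 * (eta_s * s^2 + eta_c * t^2))"
  unfolding gain_def U_star_eq[OF assms] by simp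

lemma gain_nonneg:
  assumes "eta_s * s^2 + eta_c * t^2 > 0"
  shows "gain mu_s mu_c eta_s eta_c s t c \<ge> 0"
  unfolding gain_eq[OF assms] using assms by simp

lemma gain_antimono_sigma_c:
  assumes "eta_c \<ge> 0" and "eta_s * s^2 + eta_c * t1^2 > 0" and "t1^2 \<le> t2^2"
  shows "gain mu_s mu_c eta_s eta_c s t2 c \<le> gain mu_s mu_c eta_s eta_c s t1 c"
proof -
  have K_le: "eta_s * s^2 + eta_c * t1^2 \<le> eta_s * s^2 + eta_c * t2^2"
    using assms(1,3) by (simp add: mult_left_mono)
  then have K2_pos: "eta_s * s^2 + eta_c * t2^2 > 0"
    using assms(2) by linarith
  show ?thesis
    unfolding gain_eq[OF assms(2)] gain_eq[OF K2_pos]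
    by (intro divide_left_mono) (use K_le assms(2) in auto)
qed

lemma square_div_has_real_derivative:
  fixes f g :: "real \<Rightarrow> real"
  assumes "(f has_real_derivative f') (at x)" and "(g has_real_derivative g') (at x)"
    and "g x \<noteq> 0"
  shows "((\<lambda>x. (f x)^2 / (4 * g x)) has_real_derivative
           f x * (2 * f' * g x - f x * g') / (4 * (g x)^2)) (at x)"
proof -
  have "((\<lambda>x. (f x)^2 / (4 * g x)) has_real_derivative
           (2 * f x * f' * (4 * g x) - (f x)^2 * (4 * g')) / (4 * g x)^2) (at x)"
    using assms by (auto intro!: derivative_eq_intros simp: power2_eq_square algebra_simps)
  moreover have "(2 * f x * f' * (4 * g x) - (f x)^2 * (4 * g')) / (4 * g x)^2
      = f x * (2 * f' * g x - f x * g') / (4 * (g x)^2)"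
    using assms(3) by (simp add: field_simps power2_eq_square)
  ultimately show ?thesis
    by simp
qed

lemma gain_has_derivative_sigma_s:
  assumes "eta_s \<ge> 0" and "eta_c * t^2 > 0"
  shows "((\<lambda>x. gain mu_s mu_c eta_s eta_c x t c) has_real_derivative
           2 * eta_s * s * (2 * eta_s * s^2 - mu_s + mu_c)
             * (4 * (eta_s * s^2 + eta_c * t^2) - (2 * eta_s * s^2 - mu_s + mu_c))
             / (4 * (eta_s * s^2 + eta_c * t^2)^2)) (at s)"
proof -
  have K_pos: "eta_s * x^2 + eta_c * t^2 > 0" for x :: real
    using assms by (simp add: add_nonneg_pos)
  have D_deriv: "((\<lambda>x. 2 * eta_s * x^2 - mu_s + mu_c) has_real_derivative 4 * eta_s * s) (at s)"
    by (auto intro!: derivative_eq_intros)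
  have K_deriv: "((\<lambda>x. eta_s * x^2 + eta_c * t^2) has_real_derivative 2 * eta_s * s) (at s)"
    by (auto intro!: derivative_eq_intros)
  have gain_fun: "(\<lambda>x. gain mu_s mu_c eta_s eta_c x t c)
      = (\<lambda>x. (2 * eta_s * x^2 - mu_s + mu_c)^2 / (4 * (eta_s * x^2 + eta_c * t^2)))"
    using gain_eq[OF K_pos] by simp
  show ?thesis
    unfolding gain_fun
    using square_div_has_real_derivative[OF D_deriv K_deriv] K_pos[of s]
    by (auto elim!: DERIV_cong simp: algebra_simps)
qed

lemma nonneg_iff_between_roots:
  fixes p q D K :: real
  assumes "p > 0" and "q > 0" and "K > 0"
  shows "p * D * (4 * K - D) / q \<ge> 0 \<longleftrightarrow> 0 \<le> D \<and> D \<le> 4 * K"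
proof -
  have "p * D * (4 * K - D) / q \<ge> 0 \<longleftrightarrow> D * (4 * K - D) \<ge> 0"
    using assms(1,2) by (simp add: zero_le_divide_iff zero_le_mult_iff mult.assoc)
  also have "\<dots> \<longleftrightarrow> 0 \<le> D \<and> D \<le> 4 * K"
    using assms(3) by (auto simp: zero_le_mult_iff)
  finally show ?thesis .
qed

theorem theorem8:
  fixes mu_s mu_c c sigma_c sigma_s eta_c eta_s :: real
  assumes "c \<ge> 0" and "sigma_c > 0" and "sigma_s > 0" and "eta_c > 0" and "eta_s > 0"
  shows "(\<exists>r. creator_util mu_s mu_c eta_s eta_c sigma_s sigma_c c r
                 = U_star mu_s mu_c eta_s eta_c sigma_s sigma_c c)
    \<and> gain mu_s mu_c eta_s eta_c sigma_s sigma_c c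
        = (2 * eta_s * sigma_s^2 - mu_s + mu_c)^2 / (4 * (eta_s * sigma_s^2 + eta_c * sigma_c^2))
    \<and> gain mu_s mu_c eta_s eta_c sigma_s sigma_c c \<ge> 0
    \<and> (\<lambda>x. gain mu_s mu_c eta_s eta_c x sigma_c c) differentiable (at sigma_s)
    \<and> (deriv (\<lambda>x. gain mu_s mu_c eta_s eta_c x sigma_c c) sigma_s \<ge> 0 \<longleftrightarrow>
        (- 2 * eta_s * sigma_s^2 - 4 * eta_c * sigma_c^2 \<le> mu_s - mu_c
         \<and> mu_s - mu_c \<le> 2 * eta_s * sigma_s^2))
    \<and> (\<forall>s1 s2. 0 < s1 \<longrightarrow> s1 \<le> s2 \<longrightarrow>
        gain mu_s mu_c eta_s eta_c sigma_s s2 c \<le> gain mu_s mu_c eta_s eta_c sigma_s s1 c)"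
proof -
  have K: "eta_s * sigma_s^2 + eta_c * sigma_c^2 > 0"
    using assms by (simp add: add_pos_pos)
  have "eta_s \<ge> 0" "eta_c * sigma_c^2 > 0"
    using assms by simp_all
  note deriv_gain =
    gain_has_derivative_sigma_s[where mu_s = mu_s and mu_c = mu_c and s = sigma_s and c = c, OF this]
  then have differentiable: "(\<lambda>x. gain mu_s mu_c eta_s eta_c x sigma_c c) differentiable (at sigma_s)"
    using real_differentiable_def by blast
  have deriv_sign: "deriv (\<lambda>x. gain mu_s mu_c eta_s eta_c x sigma_c c) sigma_s \<ge> 0 \<longleftrightarrow>
        (- 2 * eta_s * sigma_s^2 - 4 * eta_c * sigma_c^2 \<le> mu_s - mu_c
         \<and> mu_s - mu_c \<le> 2 * eta_s * sigma_s^2)"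
    unfolding DERIV_imp_deriv[OF deriv_gain]
    using assms K by (subst nonneg_iff_between_roots) (auto simp: algebra_simps)
  have antimono: "gain mu_s mu_c eta_s eta_c sigma_s s2 c \<le> gain mu_s mu_c eta_s eta_c sigma_s s1 c"
    if "0 < s1" "s1 \<le> s2" for s1 s2
    using assms that by (intro gain_antimono_sigma_c) (simp_all add: add_pos_pos power_mono)
  show ?thesis
    using creator_util_attains_U_star[OF K] gain_eq[OF K] gain_nonneg[OF K]
      differentiable deriv_sign antimono by blast
qed

end
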